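(* Let $\vec{G}$ be a DDMOG on $n$ vertices with $imb(\vec{G})=0$, with a DDM labeling $g$, and index its vertices $v_1,\dots,v_n$ so that $g(v_i)=i$. Let $\vec{H}$ be an oriented graph on $m$ vertices, vertex-disjoint from $\vec{G}$, with a bijective labeling $h:V(\vec{H})\to\{1,2,\dots,m\}$ such that every vertex $v\in V(\vec{H})$ satisfies either $m+1\le|wt_h(v)|\le m+n$ or $wt_h(v)=0$, and such that $\sum_{v\in V_h^{i+m}(\vec{H})}h(v)=\sum_{v\in V_h^{-i-m}(\vec{H})}h(v)$ for each $1\le i\le n$. Then the weighted sum $\vec{G}\oplus_{wt_h}^m\vec{H}$ is a DDMOG on $n+m$ vertices.
   Context: An oriented graph is a finite digraph without loops such that whenever $(u,v)$ is an arc, $(v,u)$ is not. For a vertex $v$, $N^+(v)=\{x:(x,v)\text{ is an arc}\}$, $N^-(v)=\{x:(v,x)\text{ is an arc}\}$, $imb(v)=|N^+(v)|-|N^-(v)|$ and $imb(\vec{G})=\max_v|imb(v)|$. For a labeling $f$, $wt_f(v)=\sum_{x\in N^+(v)}f(x)-\sum_{x\in N^-(v)}f(x)$. A DDM labeling of an oriented graph on $n$ vertices is a bijection $f:V\to\{1,\dots,n\}$ with $wt_f(v)=0$ for all $v$; a DDMOG is an oriented graph admitting one. For an oriented graph $\vec{H}$ with labeling $h$ and integer $j$, $V_h^{j}(\vec{H})=\{u:wt_h(u)=j\}$. Weighted sum: let $\vec{G}$ have vertices $v_1,\dots,v_n$ (indexed by a labeling $g$ with $g(v_i)=i$), $s\in\mathbb{Z}$,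 and $\vec{H}$ (vertex-disjoint from $\vec{G}$) have a labeling $h:V(\vec{H})\to\mathbb{Z}^+$ with $\{|wt_h(u)|:u\in V(\vec{H})\}\subseteq\{0\}\cup\{i+s:1\le i\le n\}$; then $\vec{G}\oplus_{wt_h}^s\vec{H}$ has vertex set $V(\vec{G})\cup V(\vec{H})$ and arc set $E(\vec{G})\cup E(\vec{H})\cup\bigcup_{i=1}^n(E^i\cup E^{-i})$, where $E^i=\{(v_i,u):u\in V_h^{-i-s}(\vec{H})\}$ and $E^{-i}=\{(u,v_i):u\in V_h^{i+s}(\vec{H})\}$. *)

theory Defs
  imports Main
begin

definition oriented_graph :: "'a set \<Rightarrow> ('a \<times> 'a) set \<Rightarrow> bool" where
  "oriented_graph V E \<longleftrightarrow> finite V \<and> E \<subseteq> V \<times> V \<and>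
     (\<forall>u v. (u, v) \<in> E \<longrightarrow> u \<noteq> v \<and> (v, u) \<notin> E)"

definition in_nbrs :: "('a \<times> 'a) set \<Rightarrow> 'a \<Rightarrow> 'a set" where
  "in_nbrs E v = {x. (x, v) \<in> E}"

definition out_nbrs :: "('a \<times> 'a) set \<Rightarrow> 'a \<Rightarrow> 'a set" where
  "out_nbrs E v = {x. (v, x) \<in> E}"

definition imb :: "('a \<times> 'a) set \<Rightarrow> 'a \<Rightarrow> int" where
  "imb E v = int (card (in_nbrs E v)) - int (card (out_nbrs E v))"

definition graph_imb :: "'a set \<Rightarrow> ('a \<times> 'a) set \<Rightarrow> int" where
  "graph_imb V E = (if V = {} then 0 else Max ((\<lambda>v. \<bar>imb E v\<bar>) ` V))"

definition wt :: "('a \<times> 'a) set \<Rightarrow> ('a \<Rightarrow> int) \<Rightarrow> 'a \<Rightarrow> int" where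
  "wt E f v = (\<Sum>x\<in>in_nbrs E v. f x) - (\<Sum>x\<in>out_nbrs E v. f x)"

definition DDM_labeling :: "'a set \<Rightarrow> ('a \<times> 'a) set \<Rightarrow> ('a \<Rightarrow> int) \<Rightarrow> bool" where
  "DDM_labeling V E f \<longleftrightarrow> bij_betw f V {1..int (card V)} \<and> (\<forall>v\<in>V. wt E f v = 0)"

definition DDMOG :: "'a set \<Rightarrow> ('a \<times> 'a) set \<Rightarrow> bool" where
  "DDMOG V E \<longleftrightarrow> oriented_graph V E \<and> (\<exists>f. DDM_labeling V E f)"

definition Vlevel :: "'a set \<Rightarrow> ('a \<times> 'a) set \<Rightarrow> ('a \<Rightarrow> int) \<Rightarrow> int \<Rightarrow> 'a set" where
  "Vlevel V E h j = {u \<in> V. wt E h u = j}"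

text \<open>Weighted sum G \<oplus>^s_{wt_h} H; the vertex v_i of G is the one with g(v_i) = i.
  E^i = {(v_i,u). u \<in> V_h^{-i-s}},  E^{-i} = {(u,v_i). u \<in> V_h^{i+s}}.\<close>
definition wsum_arcs :: "'a set \<Rightarrow> ('a \<times> 'a) set \<Rightarrow> ('a \<Rightarrow> int) \<Rightarrow> int \<Rightarrow>
    'a set \<Rightarrow> ('a \<times> 'a) set \<Rightarrow> ('a \<Rightarrow> int) \<Rightarrow> ('a \<times> 'a) set" where
  "wsum_arcs VG EG g s VH EH h =
     EG \<union> EH
     \<union> {(v, u). v \<in> VG \<and> 1 \<le> g v \<and> g v \<le> int (card VG) \<and> u \<in> Vlevel VH EH h (- g v - s)}
     \<union> {(u, v). v \<in> VG \<and> 1 \<le> g v \<and> g v \<le> int (card VG) \<and> u \<in> Vlevel VH EH h (g v + s)}"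

end

theory Submission
  imports Defs
begin

(* Label G \<union> H by g + m on G and by h on H, a bijection onto {1..n+m}. At the vertex v_i
   of G, the shift by m changes wt_g(v_i) = 0 by m * imb(v_i) = 0, and the new arcs contribute
   the h-sum over V_h^{i+m} minus the h-sum over V_h^{-i-m}, which agree by hypothesis. A vertex
   u of H with wt_h(u) = w \<noteq> 0 receives exactly one new arc, joining it to the vertex v_i with
   i + m = |w| and oriented so that the label i + m enters wt(u) with the sign opposite to w. *)

lemma in_nbrs_Un [simp]: "in_nbrs (E1 \<union> E2) v = in_nbrs E1 v \<union> in_nbrs E2 v"
  by (auto simp: in_nbrs_def)

lemma out_nbrs_Un [simp]: "out_nbrs (E1 \<union> E2) v = out_nbrs E1 v \<union> out_nbrs E2 v"
  by (auto simp: out_nbrs_def)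

lemma finite_in_nbrs: "finite E \<Longrightarrow> finite (in_nbrs E v)"
  by (rule finite_subset[of _ "fst ` E"]) (force simp: in_nbrs_def)+

lemma finite_out_nbrs: "finite E \<Longrightarrow> finite (out_nbrs E v)"
  by (rule finite_subset[of _ "snd ` E"]) (force simp: out_nbrs_def)+

lemma oriented_graph_finite_arcs: "oriented_graph V E \<Longrightarrow> finite E"
  unfolding oriented_graph_def by (metis finite_SigmaI finite_subset)

lemma wt_Un:
  assumes "finite E1" "finite E2" "E1 \<inter> E2 = {}"
  shows "wt (E1 \<union> E2) f v = wt E1 f v + wt E2 f v"
proof -
  have "in_nbrs E1 v \<inter> in_nbrs E2 v = {}" "out_nbrs E1 v \<inter> out_nbrs E2 v = {}"
    using assms(3) by (auto simp: in_nbrs_def out_nbrs_def)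
  then show ?thesis
    using assms(1,2) by (simp add: wt_def sum.union_disjoint finite_in_nbrs finite_out_nbrs)
qed

lemma wt_cong:
  assumes "\<And>x. x \<in> in_nbrs E v \<union> out_nbrs E v \<Longrightarrow> f x = f' x"
  shows "wt E f v = wt E f' v"
  using assms unfolding wt_def by (metis (no_types, lifting) UnI1 UnI2 sum.cong)

lemma wt_add_const:
  "finite E \<Longrightarrow> wt E (\<lambda>x. f x + c) v = wt E f v + c * imb E v"
  by (simp add: wt_def imb_def sum.distrib finite_in_nbrs finite_out_nbrs algebra_simps)

lemma wt_outside_vertices:
  assumes "E \<subseteq> V \<times> V" "v \<notin> V"
  shows "wt E f v = 0"
proof -
  have "in_nbrs E v = {}" "out_nbrs E v = {}"
    using assms by (auto simp: in_nbrs_def out_nbrs_def)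
  then show ?thesis by (simp add: wt_def)
qed

lemma imb_eq_0_if_graph_imb_eq_0:
  assumes "finite V" "graph_imb V E = 0" "v \<in> V"
  shows "imb E v = 0"
proof -
  have "\<bar>imb E v\<bar> \<le> Max ((\<lambda>v. \<bar>imb E v\<bar>) ` V)"
    using assms(1,3) by (intro Max_ge) auto
  then show ?thesis
    using assms(2,3) by (auto simp: graph_imb_def split: if_splits)
qed

lemma sum_fiber_inj_on:
  assumes "inj_on f A"
  shows "(\<Sum>x | x \<in> A \<and> f x = c. f x) = (if c \<in> f ` A then c else 0)"
proof (cases "c \<in> f ` A")
  case True
  then obtain a where "a \<in> A" "f a = c" by blast
  with assms have "{x. x \<in> A \<and> f x = c} = {a}" by (auto dest: inj_onD)
  with \<open>f a = c\<close> True show ?thesis by simp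
next
  case False
  then have "{x. x \<in> A \<and> f x = c} = {}" by blast
  then show ?thesis using False by (simp only: sum.empty if_False)
qed

lemma bij_betw_shifted_union:
  assumes "bij_betw g A {1..int n}" "bij_betw h B {1..int m}" "A \<inter> B = {}"
  shows "bij_betw (\<lambda>x. if x \<in> A then g x + int m else h x) (A \<union> B) {1..int n + int m}"
proof -
  have "bij_betw ((+) (int m)) {1..int n} {1 + int m..int n + int m}"
    by (simp add: bij_betw_add)
  from bij_betw_trans[OF assms(1) this]
  have "bij_betw (\<lambda>x. g x + int m) A {int m + 1..int n + int m}"
    by (simp add: comp_def add.commute)
  then have "bij_betw (\<lambda>x. if x \<in> A then g x + int m else h x) A {int m + 1..int n + int m}"
    by (rule bij_betw_cong[THEN iffD1, rotated]) simp
  moreover have "bij_betw (\<lambda>x. if x \<in> A then g x + int m else h x) B {1..int m}"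
    using assms(2) by (rule bij_betw_cong[THEN iffD1, rotated]) (use assms(3) in auto)
  ultimately have "bij_betw (\<lambda>x. if x \<in> A then g x + int m else h x) (A \<union> B)
      ({int m + 1..int n + int m} \<union> {1..int m})"
    by (rule bij_betw_combine) auto
  moreover have "{int m + 1..int n + int m} \<union> {1..int m} = {1..int n + int m}"
    by auto
  ultimately show ?thesis by simp
qed

definition connecting_arcs ::
    "'a set \<Rightarrow> ('a \<Rightarrow> int) \<Rightarrow> int \<Rightarrow> 'a set \<Rightarrow> ('a \<times> 'a) set \<Rightarrow> ('a \<Rightarrow> int) \<Rightarrow> ('a \<times> 'a) set" where
  "connecting_arcs VG g s VH EH h =
     {(v, u). v \<in> VG \<and> 1 \<le> g v \<and> g v \<le> int (card VG) \<and> u \<in> Vlevel VH EH h (- g v - s)}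
     \<union> {(u, v). v \<in> VG \<and> 1 \<le> g v \<and> g v \<le> int (card VG) \<and> u \<in> Vlevel VH EH h (g v + s)}"

lemma wsum_arcs_eq_Un_connecting_arcs:
  "wsum_arcs VG EG g s VH EH h = EG \<union> EH \<union> connecting_arcs VG g s VH EH h"
  by (simp add: wsum_arcs_def connecting_arcs_def Un_assoc)

lemma connecting_arcs_subset: "connecting_arcs VG g s VH EH h \<subseteq> VG \<times> VH \<union> VH \<times> VG"
  by (auto simp: connecting_arcs_def Vlevel_def)

lemma oriented_graph_wsum_arcs:
  assumes "oriented_graph VG EG" "oriented_graph VH EH" "VG \<inter> VH = {}" "0 \<le> s"
  shows "oriented_graph (VG \<union> VH) (wsum_arcs VG EG g s VH EH h)"
  \<comment> \<open>Opposite connecting arcs between v and u would need g v + s = - g v - s with g v \<ge> 1.\<close>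
  using assms unfolding oriented_graph_def wsum_arcs_def Vlevel_def
  by (auto; fastforce)

definition wsum_labeling :: "'a set \<Rightarrow> ('a \<Rightarrow> int) \<Rightarrow> int \<Rightarrow> ('a \<Rightarrow> int) \<Rightarrow> 'a \<Rightarrow> int" where
  "wsum_labeling VG g s h x = (if x \<in> VG then g x + s else h x)"

lemma wt_wsum_arcs_split:
  assumes "oriented_graph VG EG" "oriented_graph VH EH" "VG \<inter> VH = {}"
  shows "wt (wsum_arcs VG EG g s VH EH h) f x
           = wt EG f x + wt EH f x + wt (connecting_arcs VG g s VH EH h) f x"
proof -
  have "finite EG" "finite EH" "EG \<subseteq> VG \<times> VG" "EH \<subseteq> VH \<times> VH"
    using assms(1,2) by (auto simp: oriented_graph_def oriented_graph_finite_arcs)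
  moreover have "finite (connecting_arcs VG g s VH EH h)"
    using assms(1,2)
    by (intro finite_subset[OF connecting_arcs_subset]) (auto simp: oriented_graph_def)
  moreover have "EG \<inter> EH = {}" "(EG \<union> EH) \<inter> connecting_arcs VG g s VH EH h = {}"
    using connecting_arcs_subset \<open>EG \<subseteq> VG \<times> VG\<close> \<open>EH \<subseteq> VH \<times> VH\<close> assms(3) by blast+
  ultimately show ?thesis
    by (simp add: wsum_arcs_eq_Un_connecting_arcs wt_Un)
qed

lemma wt_wsum_arcs_at_G_vertex:
  assumes G: "oriented_graph VG EG" and H: "oriented_graph VH EH" and disj: "VG \<inter> VH = {}"
    and x: "x \<in> VG" "1 \<le> g x" "g x \<le> int (card VG)"
  shows "wt (wsum_arcs VG EG g s VH EH h) (wsum_labeling VG g s h) x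
           = wt EG g x + s * imb EG x
             + (\<Sum>u\<in>Vlevel VH EH h (g x + s). h u) - (\<Sum>u\<in>Vlevel VH EH h (- g x - s). h u)"
proof -
  let ?f = "wsum_labeling VG g s h" and ?C = "connecting_arcs VG g s VH EH h"
  have EG: "EG \<subseteq> VG \<times> VG" and EH: "EH \<subseteq> VH \<times> VH"
    using G H by (auto simp: oriented_graph_def)
  have "wt EG ?f x = wt EG (\<lambda>v. g v + s) x"
    using EG by (intro wt_cong) (auto simp: wsum_labeling_def in_nbrs_def out_nbrs_def)
  also have "\<dots> = wt EG g x + s * imb EG x"
    using G by (simp add: wt_add_const oriented_graph_finite_arcs)
  finally have wt_EG: "wt EG ?f x = wt EG g x + s * imb EG x" .
  have wt_EH: "wt EH ?f x = 0"
    using EH x disj by (intro wt_outside_vertices) auto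
  have "in_nbrs ?C x = Vlevel VH EH h (g x + s)" "out_nbrs ?C x = Vlevel VH EH h (- g x - s)"
    using x disj by (auto simp: connecting_arcs_def in_nbrs_def out_nbrs_def Vlevel_def)
  moreover have "sum ?f (Vlevel VH EH h j) = sum h (Vlevel VH EH h j)" for j
    using disj by (intro sum.cong) (auto simp: wsum_labeling_def Vlevel_def)
  ultimately have "wt ?C ?f x = (\<Sum>u\<in>Vlevel VH EH h (g x + s). h u) - (\<Sum>u\<in>Vlevel VH EH h (- g x - s). h u)"
    by (simp add: wt_def)
  with wt_EG wt_EH show ?thesis
    using wt_wsum_arcs_split[OF G H disj] by simp
qed

lemma wt_wsum_arcs_at_H_vertex:
  fixes h :: "'a \<Rightarrow> int"
  assumes G: "oriented_graph VG EG" and H: "oriented_graph VH EH" and disj: "VG \<inter> VH = {}"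
    and g: "bij_betw g VG {1..int (card VG)}" and u: "u \<in> VH"
  defines "w \<equiv> wt EH h u"
  shows "wt (wsum_arcs VG EG g s VH EH h) (wsum_labeling VG g s h) u
           = w + (if - w \<in> {s + 1..s + int (card VG)} then - w else 0)
               - (if w \<in> {s + 1..s + int (card VG)} then w else 0)"
proof -
  let ?f = "wsum_labeling VG g s h" and ?C = "connecting_arcs VG g s VH EH h"
  have EG: "EG \<subseteq> VG \<times> VG" and EH: "EH \<subseteq> VH \<times> VH"
    using G H by (auto simp: oriented_graph_def)
  have wt_EG: "wt EG ?f u = 0"
    using EG u disj by (intro wt_outside_vertices) auto
  have wt_EH: "wt EH ?f u = w"
    unfolding w_def using EH disj
    by (intro wt_cong) (auto simp: wsum_labeling_def in_nbrs_def out_nbrs_def)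
  have g_range: "1 \<le> g v \<and> g v \<le> int (card VG)" if "v \<in> VG" for v
    using g that by (auto simp: bij_betw_def)
  have "in_nbrs ?C u = {v. v \<in> VG \<and> g v + s = - w}" "out_nbrs ?C u = {v. v \<in> VG \<and> g v + s = w}"
    using u disj g_range
    by (auto simp: connecting_arcs_def in_nbrs_def out_nbrs_def Vlevel_def w_def)
  moreover have "sum ?f {v. v \<in> VG \<and> g v + s = c} = (if c \<in> {s + 1..s + int (card VG)} then c else 0)" for c
  proof -
    have "inj_on (\<lambda>v. g v + s) VG"
      using g by (auto simp: bij_betw_def inj_on_def)
    moreover have "(\<lambda>v. g v + s) ` VG = {s + 1..s + int (card VG)}"
      using g by (auto simp: bij_betw_def image_image[symmetric] add.commute)
    ultimately show ?thesis
      using sum_fiber_inj_on[of "\<lambda>v. g v + s" VG c]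
      by (simp add: wsum_labeling_def)
  qed
  ultimately have "wt ?C ?f u = (if - w \<in> {s + 1..s + int (card VG)} then - w else 0)
                               - (if w \<in> {s + 1..s + int (card VG)} then w else 0)"
    by (simp add: wt_def)
  with wt_EG wt_EH show ?thesis
    using wt_wsum_arcs_split[OF G H disj] by simp
qed

theorem theorem7:
  fixes VG VH :: "'a set" and EG EH :: "('a \<times> 'a) set"
    and g h :: "'a \<Rightarrow> int" and n m :: nat
  assumes "DDMOG VG EG"
    and "DDM_labeling VG EG g"
    and "card VG = n"
    and "graph_imb VG EG = 0"
    and "oriented_graph VH EH"
    and "card VH = m"
    and "VG \<inter> VH = {}"
    and "bij_betw h VH {1..int m}"
    and "\<forall>v\<in>VH. (int m + 1 \<le> \<bar>wt EH h v\<bar> \<and> \<bar>wt EH h v\<bar> \<le> int m + int n) \<or> wt EH h v = 0"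
    and "\<forall>i::int. 1 \<le> i \<and> i \<le> int n \<longrightarrow>
           (\<Sum>v\<in>Vlevel VH EH h (i + int m). h v) = (\<Sum>v\<in>Vlevel VH EH h (- i - int m). h v)"
  shows "DDMOG (VG \<union> VH) (wsum_arcs VG EG g (int m) VH EH h)
         \<and> card (VG \<union> VH) = n + m"
proof -
  let ?E = "wsum_arcs VG EG g (int m) VH EH h" and ?f = "wsum_labeling VG g (int m) h"
  have G: "oriented_graph VG EG" and H: "oriented_graph VH EH"
    using assms(1,5) by (simp_all add: DDMOG_def)
  have g: "bij_betw g VG {1..int n}" and wt_g: "\<forall>v\<in>VG. wt EG g v = 0"
    using assms(2,3) by (simp_all add: DDM_labeling_def)
  have card: "card (VG \<union> VH) = n + m"
    using assms(3,6,7) G H by (simp add: card_Un_disjoint oriented_graph_def)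
  have "bij_betw ?f (VG \<union> VH) {1..int (card (VG \<union> VH))}"
    using bij_betw_shifted_union[OF g assms(8,7)] card by (simp add: wsum_labeling_def[abs_def])
  moreover have "wt ?E ?f x = 0" if "x \<in> VG" for x
  proof -
    have "1 \<le> g x \<and> g x \<le> int n" using g that by (auto simp: bij_betw_def)
    moreover have "imb EG x = 0"
      using imb_eq_0_if_graph_imb_eq_0 G assms(4) that by (auto simp: oriented_graph_def)
    ultimately show ?thesis
      using wt_wsum_arcs_at_G_vertex[OF G H assms(7) that] wt_g that assms(3,10) by simp
  qed
  moreover have "wt ?E ?f x = 0" if "x \<in> VH" for x
    using wt_wsum_arcs_at_H_vertex[OF G H assms(7) _ that] g assms(3) assms(9) that by auto
  ultimately show ?thesis
    using oriented_graph_wsum_arcs[OF G H assms(7)] card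
    by (auto simp: DDMOG_def DDM_labeling_def)
qed

end
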